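(* Let $m,n\ge0$ and let $f_1,\dots,f_n,h_1,\dots,h_m$ be holomorphic functions on the unit disk. If $$\sum_{j=1}^n|f_j|^2=\sum_{k=1}^m|h_k|^2$$ on the disk, then $\{f_1,\dots,f_n,h_1,\dots,h_m\}$ is linearly dependent. *)

theory Defs
  imports "HOL-Analysis.Analysis"
begin

definition lin_dependent_on :: "complex set \<Rightarrow> (complex \<Rightarrow> complex) list \<Rightarrow> bool" where
  "lin_dependent_on S gs \<longleftrightarrow>
     (\<exists>c :: nat \<Rightarrow> complex. (\<exists>i<length gs. c i \<noteq> 0) \<and>
        (\<forall>z\<in>S. (\<Sum>i<length gs. c i * (gs ! i) z) = 0))"

end

theory Submission
  imports Defs "HOL-Complex_Analysis.Complex_Analysis"
begin

text \<open>
  With signs \<open>s\<^sub>i = \<plusminus>1\<close> the hypothesis reads \<open>\<Sum>\<^sub>i s\<^sub>i |g\<^sub>i|\<^sup>2 = 0\<close>. If a sesquilinear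
  expression \<open>\<Sum>\<^sub>i conj (F\<^sub>i) G\<^sub>i\<close> in holomorphic functions vanishes, so does its real derivative
  \<open>conj t \<cdot> P + t \<cdot> Q\<close> with \<open>P = \<Sum>\<^sub>i conj (F\<^sub>i') G\<^sub>i\<close> and \<open>Q = \<Sum>\<^sub>i conj (F\<^sub>i) G\<^sub>i'\<close>, for every
  direction \<open>t\<close>; hence \<open>P = Q = 0\<close>. Iterating, \<open>\<Sum>\<^sub>i s\<^sub>i conj (D\<^sup>a g\<^sub>i) (D\<^sup>b g\<^sub>i) = 0\<close> for all
  \<open>a, b\<close>. If \<open>D\<^sup>a g\<^sub>i z\<^sub>0 \<noteq> 0\<close> for some \<open>i\<close> and \<open>a\<close>, the combination with coefficients
  \<open>s\<^sub>j conj (D\<^sup>a g\<^sub>j z\<^sub>0)\<close> has all derivatives zero at \<open>z\<^sub>0\<close> and so vanishes by the identity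
  theorem; otherwise every \<open>g\<^sub>i\<close> vanishes identically.
\<close>

lemma higher_deriv_sum:
  fixes f :: "'i \<Rightarrow> complex \<Rightarrow> complex"
  assumes "\<And>i. i \<in> I \<Longrightarrow> f i holomorphic_on S" "open S" "z \<in> S"
  shows "(deriv ^^ n) (\<lambda>w. \<Sum>i\<in>I. f i w) z = (\<Sum>i\<in>I. (deriv ^^ n) (f i) z)"
  using assms(1)
proof (induction I rule: infinite_finite_induct)
  case (insert i I)
  have "(deriv ^^ n) (\<lambda>w. f i w + (\<Sum>j\<in>I. f j w)) z
          = (deriv ^^ n) (f i) z + (deriv ^^ n) (\<lambda>w. \<Sum>j\<in>I. f j w) z"
    by (rule higher_deriv_add) (use insert.prems assms(2,3) in \<open>auto intro!: holomorphic_intros\<close>)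
  then show ?case using insert by simp
qed simp_all

lemma sum_cnj_mult_eq_0_imp_deriv:
  fixes F G :: "'i \<Rightarrow> complex \<Rightarrow> complex"
  assumes S: "open S"
    and holF: "\<And>i. i \<in> I \<Longrightarrow> F i holomorphic_on S"
    and holG: "\<And>i. i \<in> I \<Longrightarrow> G i holomorphic_on S"
    and zero: "\<And>w. w \<in> S \<Longrightarrow> (\<Sum>i\<in>I. cnj (F i w) * G i w) = 0"
    and z: "z \<in> S"
  shows "(\<Sum>i\<in>I. cnj (deriv (F i) z) * G i z) = 0"
    and "(\<Sum>i\<in>I. cnj (F i z) * deriv (G i) z) = 0"
proof -
  define P where "P = (\<Sum>i\<in>I. cnj (deriv (F i) z) * G i z)"
  define Q where "Q = (\<Sum>i\<in>I. cnj (F i z) * deriv (G i) z)"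
  have "((\<lambda>w. cnj (F i w) * G i w) has_derivative
          (\<lambda>t. cnj t * (cnj (deriv (F i) z) * G i z) + t * (cnj (F i z) * deriv (G i) z))) (at z)"
    if "i \<in> I" for i
  proof -
    have "(F i has_derivative (\<lambda>t. deriv (F i) z * t)) (at z)"
         "(G i has_derivative (\<lambda>t. deriv (G i) z * t)) (at z)"
      using holF holG that S z by (auto intro!: has_field_derivative_imp_has_derivative holomorphic_derivI)
    from has_derivative_mult[OF has_derivative_cnj[OF this(1)] this(2)]
    show ?thesis by (simp add: algebra_simps)
  qed
  then have "((\<lambda>w. \<Sum>i\<in>I. cnj (F i w) * G i w) has_derivative (\<lambda>t. cnj t * P + t * Q)) (at z)"
    unfolding P_def Q_def sum_distrib_left sum.distrib[symmetric] by (rule has_derivative_sum)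
  moreover have "((\<lambda>w. \<Sum>i\<in>I. cnj (F i w) * G i w) has_derivative (\<lambda>t. 0)) (at z)"
    by (rule has_derivative_transform_within_open[of "\<lambda>w. 0" _ _ _ S]) (use S z zero in auto)
  ultimately have "(\<lambda>t. cnj t * P + t * Q) = (\<lambda>t. 0)"
    by (rule has_derivative_unique)
  from fun_cong[OF this, of 1] fun_cong[OF this, of \<i>]
  have "P + Q = 0" "\<i> * (Q - P) = 0" by (simp_all add: algebra_simps)
  then show "P = 0" "Q = 0" by auto
qed

lemma sum_cnj_mult_eq_0_imp_higher_derivs:
  fixes F G :: "'i \<Rightarrow> complex \<Rightarrow> complex"
  assumes S: "open S"
    and holF: "\<And>i. i \<in> I \<Longrightarrow> F i holomorphic_on S"
    and holG: "\<And>i. i \<in> I \<Longrightarrow> G i holomorphic_on S"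
    and zero: "\<And>w. w \<in> S \<Longrightarrow> (\<Sum>i\<in>I. cnj (F i w) * G i w) = 0"
    and z: "z \<in> S"
  shows "(\<Sum>i\<in>I. cnj ((deriv ^^ a) (F i) z) * (deriv ^^ b) (G i) z) = 0"
proof -
  let ?vanish = "\<lambda>a b. \<forall>w\<in>S. (\<Sum>i\<in>I. cnj ((deriv ^^ a) (F i) w) * (deriv ^^ b) (G i) w) = 0"
  have step: "?vanish (Suc a) b \<and> ?vanish a (Suc b)" if "?vanish a b" for a b
    using sum_cnj_mult_eq_0_imp_deriv[of S I "\<lambda>i. (deriv ^^ a) (F i)" "\<lambda>i. (deriv ^^ b) (G i)"]
      that S holF holG by (simp add: holomorphic_higher_deriv)
  have "?vanish a b"
  proof (induction a arbitrary: b)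
    case 0
    show ?case
    proof (induction b)
      case 0
      then show ?case using zero by simp
    next
      case (Suc b)
      then show ?case using step[of 0 b] by simp
    qed
  next
    case (Suc a)
    then show ?case using step[of a b] by simp
  qed
  then show ?thesis using z by blast
qed

lemma holomorphic_lin_dependent_if_signed_sum_norm_sq_eq_0:
  fixes g :: "'i \<Rightarrow> complex \<Rightarrow> complex" and s :: "'i \<Rightarrow> real"
  assumes S: "open S" "connected S"
    and I: "I \<noteq> {}"
    and hol: "\<And>i. i \<in> I \<Longrightarrow> g i holomorphic_on S"
    and s: "\<And>i. i \<in> I \<Longrightarrow> s i \<noteq> 0"
    and zero: "\<And>z. z \<in> S \<Longrightarrow> (\<Sum>i\<in>I. s i * (cmod (g i z))\<^sup>2) = 0"
  shows "\<exists>c. (\<exists>i\<in>I. c i \<noteq> 0) \<and> (\<forall>z\<in>S. (\<Sum>i\<in>I. c i * g i z) = 0)"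
proof (cases "S = {}")
  case True
  then show ?thesis using I by auto
next
  case False
  then obtain z\<^sub>0 where z\<^sub>0: "z\<^sub>0 \<in> S" by blast
  have hol_sg: "(\<lambda>z. s i * g i z) holomorphic_on S" if "i \<in> I" for i
    using hol[OF that] by (intro holomorphic_intros)
  have sesq_zero: "(\<Sum>i\<in>I. cnj (g i z) * (s i * g i z)) = 0" if "z \<in> S" for z
  proof -
    have "(\<Sum>i\<in>I. cnj (g i z) * (s i * g i z)) = of_real (\<Sum>i\<in>I. s i * (cmod (g i z))\<^sup>2)"
      by (simp only: of_real_sum of_real_mult complex_norm_square) (simp add: mult_ac)
    then show ?thesis using zero[OF that] by simp
  qed
  have cross_derivs: "(\<Sum>i\<in>I. s i * cnj ((deriv ^^ a) (g i) z\<^sub>0) * (deriv ^^ b) (g i) z\<^sub>0) = 0"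
    for a b
  proof -
    have "(\<Sum>i\<in>I. s i * cnj ((deriv ^^ a) (g i) z\<^sub>0) * (deriv ^^ b) (g i) z\<^sub>0)
        = (\<Sum>i\<in>I. cnj ((deriv ^^ a) (g i) z\<^sub>0) * (deriv ^^ b) (\<lambda>z. s i * g i z) z\<^sub>0)"
      by (rule sum.cong[OF refl]) (use higher_deriv_cmult[OF hol z\<^sub>0 S(1)] in simp)
    also have "\<dots> = 0"
      by (rule sum_cnj_mult_eq_0_imp_higher_derivs[of S I g "\<lambda>i z. s i * g i z"])
        (use S hol hol_sg sesq_zero z\<^sub>0 in auto)
    finally show ?thesis .
  qed
  show ?thesis
  proof (cases "\<exists>a. \<exists>i\<in>I. (deriv ^^ a) (g i) z\<^sub>0 \<noteq> 0")
    case True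
    then obtain a i where i: "i \<in> I" "(deriv ^^ a) (g i) z\<^sub>0 \<noteq> 0" by blast
    define c where "c j = s j * cnj ((deriv ^^ a) (g j) z\<^sub>0)" for j
    have "(\<Sum>j\<in>I. c j * g j z) = 0" if "z \<in> S" for z
    proof (rule holomorphic_fun_eq_0_on_connected[OF _ S _ z\<^sub>0 that])
      show "(\<lambda>z. \<Sum>j\<in>I. c j * g j z) holomorphic_on S"
        using hol by (intro holomorphic_intros)
      fix b
      have "(deriv ^^ b) (\<lambda>z. \<Sum>j\<in>I. c j * g j z) z\<^sub>0 = (\<Sum>j\<in>I. (deriv ^^ b) (\<lambda>z. c j * g j z) z\<^sub>0)"
        by (rule higher_deriv_sum) (use hol S(1) z\<^sub>0 in \<open>auto intro!: holomorphic_intros\<close>)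
      also have "\<dots> = (\<Sum>j\<in>I. c j * (deriv ^^ b) (g j) z\<^sub>0)"
        by (rule sum.cong[OF refl]) (use higher_deriv_cmult[OF hol z\<^sub>0 S(1)] in simp)
      also have "\<dots> = 0"
        using cross_derivs[of a b] unfolding c_def .
      finally show "(deriv ^^ b) (\<lambda>z. \<Sum>j\<in>I. c j * g j z) z\<^sub>0 = 0" .
    qed
    moreover have "c i \<noteq> 0" using i s unfolding c_def by simp
    ultimately show ?thesis using i(1) by blast
  next
    case False
    then have "g i z = 0" if "i \<in> I" "z \<in> S" for i z
      using holomorphic_fun_eq_0_on_connected[OF hol[OF that(1)] S _ z\<^sub>0 that(2)] that(1) by blast
    then show ?thesis using I by (intro exI[of _ "\<lambda>_. 1"]) auto
  qed
qed

theorem lemma7p4: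
  fixes fs hs :: "(complex \<Rightarrow> complex) list"
  assumes nonempty: "fs @ hs \<noteq> []"
    and holf: "\<forall>f\<in>set fs. f holomorphic_on ball 0 1"
    and holh: "\<forall>h\<in>set hs. h holomorphic_on ball 0 1"
    and eq: "\<forall>z\<in>ball 0 1.
               (\<Sum>j<length fs. (cmod ((fs ! j) z))\<^sup>2) = (\<Sum>k<length hs. (cmod ((hs ! k) z))\<^sup>2)"
  shows "lin_dependent_on (ball 0 1) (fs @ hs)"
proof -
  define gs where "gs = fs @ hs"
  define s :: "nat \<Rightarrow> real" where "s i = (if i < length fs then 1 else -1)" for i
  have hol: "(gs ! i) holomorphic_on ball 0 1" if "i \<in> {..<length gs}" for i
    using that holf holh nth_mem[of i gs] unfolding gs_def by auto
  have signed_sum: "(\<Sum>i\<in>{..<length gs}. s i * (cmod ((gs ! i) z))\<^sup>2)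
          = (\<Sum>j<length fs. (cmod ((fs ! j) z))\<^sup>2) - (\<Sum>k<length hs. (cmod ((hs ! k) z))\<^sup>2)" for z
  proof -
    have split: "(\<Sum>i<n + m. \<phi> i) = (\<Sum>i<n. \<phi> i) + (\<Sum>k<m. \<phi> (n + k))" for n m and \<phi> :: "nat \<Rightarrow> real"
      by (induction m) (auto simp: add_ac)
    show ?thesis by (simp add: gs_def split s_def nth_append sum_negf)
  qed
  have "\<exists>c. (\<exists>i\<in>{..<length gs}. c i \<noteq> 0) \<and> (\<forall>z\<in>ball 0 1. (\<Sum>i\<in>{..<length gs}. c i * (gs ! i) z) = 0)"
  proof (rule holomorphic_lin_dependent_if_signed_sum_norm_sq_eq_0[OF open_ball connected_ball _ hol])
    show "{..<length gs} \<noteq> {}" using nonempty unfolding gs_def by auto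
    show "s i \<noteq> 0" for i unfolding s_def by simp
    show "(\<Sum>i\<in>{..<length gs}. s i * (cmod ((gs ! i) z))\<^sup>2) = 0" if "z \<in> ball 0 1" for z
      using eq that signed_sum by simp
  qed
  then show ?thesis unfolding lin_dependent_on_def gs_def by auto
qed

end
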